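(* Let $k$ be an infinite field of characteristic $0$. (i) If $W_1=W(X_1,Y_1),W_2=W(X_2,Y_2)\in\Xi'$, $H\in\Xi$ and $(T_1,T_2)\in Cl_H(W_2)$, then $\mathcal{F}(\beta_{W_1,W_2}(T_1,T_2))=\beta_{\mathcal{F}(W_1),\mathcal{F}(W_2)}(T_1\oplus T_2)$. (ii) If $F_1=F(M_1),F_2=F(M_2)\in\mathrm{Ob}\,\Theta^0$, $(N,p)\in\Theta$ and $T\in Cl_N(F_2)$, then $\mathcal{F}^{-1}(\beta_{F_1,F_2}(T))=\beta_{\mathcal{F}^{-1}(F_1),\mathcal{F}^{-1}(F_2)}(T\cap\ker p,\,T\cap\mathrm{im}\,p)$, where $p$ here denotes the projection of $F_2$.
   Context: Representations $(L,V)$ (Lie algebra $L$ over $k$, $L$-module $V$) with homomorphisms $(\varphi,\psi)$ ($\varphi$ Lie homomorphism, $\psi$ linear, $\varphi(l)\circ\psi(v)=\psi(l\circ v)$) form $\Xi$. $W(X,Y)=(L(X),A(X)Y)$ is the free representation; $\Xi'$ is the set of $W(X,Y)$ with $X,Y$ finite subsets of fixed countable sets and $|X|=|Y|$. A Lie algebra with projection-derivation is a Lie algebra $M$ with linear $p$, $p^2=p$, $p[m_1,m_2]=[pm_1,m_2]+[m_1,pm_2]$; these form the variety $\Theta$, and $\Theta^0$ consists of its free algebras on finite subsets of a fixed countable set. The functor $\mathcal{F}$ sends $(L,V)$ to $(L\oplus V,p_V)$ ($[l_1+v_1,l_2+v_2]=[l_1,l_2]+l_1\circ v_2-l_2\circ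 v_1$, $p_V(l+v)=v$) and $(\varphi,\psi)$ to $\varphi\oplus\psi$; $\mathcal{F}^{-1}$ sends $(M,p)$ to $(\ker p,\mathrm{im}\,p)$ ($l\circ v=[l,v]$) and $f:(M_1,p_1)\to(M_2,p_2)$ to $(r_2f\kappa_1,p_2f\iota_1)$ with $r_2=\mathrm{id}-p_2$ and $\kappa_1,\iota_1$ inclusions; both are applied to pairs of morphisms componentwise. Closedness: for an algebra $H$, a free object $W$ and a subset $T$ of $W$ (a pair of subsets of the two sorts for representations), $T'_H$ is the set of homomorphisms $W\to H$ whose kernel contains $T$ (sortwise), $T''_H$ the (sortwise) intersection of their kernels, $T$ is $H$-closed if $T''_H=T$, and $Cl_H(W)$ is the set of $H$-closed subsets. For free objects $W_1,W_2$ and a congruence $T$ of $W_2$, $\beta_{W_1,W_2}(T)$ is the relation on $\mathrm{Hom}(W_1,W_2)$: two homomorphisms are related iff their values at every element of $W_1$ are congruent modulo $T$ (for representations: sortwise, the Lie parts modulo $T_1$ on $L(X_1)$ and the module parts modulo $T_2$ on $A(X_1)Y_1$). *)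

theory Defs
  imports Main "HOL-Library.FuncSet"
begin

record ('k,'a) vs =
  car :: "'a set"
  zer :: 'a
  add :: "'a \<Rightarrow> 'a \<Rightarrow> 'a"
  sm  :: "'k \<Rightarrow> 'a \<Rightarrow> 'a"

record ('k,'a) lie = "('k,'a) vs" +
  br :: "'a \<Rightarrow> 'a \<Rightarrow> 'a"

definition sub :: "('k::field,'a,'m) vs_scheme \<Rightarrow> 'a \<Rightarrow> 'a \<Rightarrow> 'a" where
  "sub V a b = add V a (sm V (-1) b)"

definition vspace :: "('k::field,'a,'m) vs_scheme \<Rightarrow> bool" where
  "vspace V \<longleftrightarrow>
     zer V \<in> car V
   \<and> (\<forall>a\<in>car V. \<forall>b\<in>car V. add V a b \<in> car V)
   \<and> (\<forall>c. \<forall>a\<in>car V. sm V c a \<in> car V)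
   \<and> (\<forall>a\<in>car V. \<forall>b\<in>car V. \<forall>c\<in>car V. add V (add V a b) c = add V a (add V b c))
   \<and> (\<forall>a\<in>car V. \<forall>b\<in>car V. add V a b = add V b a)
   \<and> (\<forall>a\<in>car V. add V a (zer V) = a)
   \<and> (\<forall>a\<in>car V. add V a (sm V (-1) a) = zer V)
   \<and> (\<forall>c. \<forall>a\<in>car V. \<forall>b\<in>car V. sm V c (add V a b) = add V (sm V c a) (sm V c b))
   \<and> (\<forall>c d. \<forall>a\<in>car V. sm V (c + d) a = add V (sm V c a) (sm V d a))
   \<and> (\<forall>c d. \<forall>a\<in>car V. sm V (c * d) a = sm V c (sm V d a))
   \<and> (\<forall>a\<in>car V. sm V 1 a = a)"

text \<open>Linear maps; maps are extensional (undefined off the carrier), so that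
  sets of homomorphisms consist of canonical representatives.\<close>
definition linmap :: "('k::field,'a,'m) vs_scheme \<Rightarrow> ('k,'b,'n) vs_scheme \<Rightarrow> ('a \<Rightarrow> 'b) \<Rightarrow> bool" where
  "linmap V W f \<longleftrightarrow> f \<in> car V \<rightarrow>\<^sub>E car W
     \<and> (\<forall>a\<in>car V. \<forall>b\<in>car V. f (add V a b) = add W (f a) (f b))
     \<and> (\<forall>c. \<forall>a\<in>car V. f (sm V c a) = sm W c (f a))"

definition lie_alg :: "('k::field,'a,'m) lie_scheme \<Rightarrow> bool" where
  "lie_alg L \<longleftrightarrow> vspace L
   \<and> (\<forall>a\<in>car L. \<forall>b\<in>car L. br L a b \<in> car L)
   \<and> (\<forall>a\<in>car L. \<forall>b\<in>car L. \<forall>c\<in>car L. br L (add L a b) c = add L (br L a c) (br L b c))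
   \<and> (\<forall>a\<in>car L. \<forall>b\<in>car L. \<forall>c\<in>car L. br L a (add L b c) = add L (br L a b) (br L a c))
   \<and> (\<forall>k. \<forall>a\<in>car L. \<forall>b\<in>car L. br L (sm L k a) b = sm L k (br L a b))
   \<and> (\<forall>k. \<forall>a\<in>car L. \<forall>b\<in>car L. br L a (sm L k b) = sm L k (br L a b))
   \<and> (\<forall>a\<in>car L. br L a a = zer L)
   \<and> (\<forall>a\<in>car L. \<forall>b\<in>car L. \<forall>c\<in>car L.
        add L (add L (br L a (br L b c)) (br L b (br L c a))) (br L c (br L a b)) = zer L)"

definition lie_hom :: "('k::field,'a,'m) lie_scheme \<Rightarrow> ('k,'b,'n) lie_scheme \<Rightarrow> ('a \<Rightarrow> 'b) \<Rightarrow> bool" where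
  "lie_hom L M f \<longleftrightarrow> linmap L M f \<and> (\<forall>a\<in>car L. \<forall>b\<in>car L. f (br L a b) = br M (f a) (f b))"

record ('k,'a,'b) rep =
  rL :: "('k,'a) lie"
  rV :: "('k,'b) vs"
  act :: "'a \<Rightarrow> 'b \<Rightarrow> 'b"

definition is_rep :: "('k::field,'a,'b) rep \<Rightarrow> bool" where
  "is_rep R \<longleftrightarrow> lie_alg (rL R) \<and> vspace (rV R)
   \<and> (\<forall>l\<in>car (rL R). \<forall>v\<in>car (rV R). act R l v \<in> car (rV R))
   \<and> (\<forall>l1\<in>car (rL R). \<forall>l2\<in>car (rL R). \<forall>v\<in>car (rV R).
        act R (add (rL R) l1 l2) v = add (rV R) (act R l1 v) (act R l2 v))
   \<and> (\<forall>c. \<forall>l\<in>car (rL R). \<forall>v\<in>car (rV R). act R (sm (rL R) c l) v = sm (rV R) c (act R l v))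
   \<and> (\<forall>l\<in>car (rL R). \<forall>u\<in>car (rV R). \<forall>v\<in>car (rV R).
        act R l (add (rV R) u v) = add (rV R) (act R l u) (act R l v))
   \<and> (\<forall>c. \<forall>l\<in>car (rL R). \<forall>v\<in>car (rV R). act R l (sm (rV R) c v) = sm (rV R) c (act R l v))
   \<and> (\<forall>l1\<in>car (rL R). \<forall>l2\<in>car (rL R). \<forall>v\<in>car (rV R).
        act R (br (rL R) l1 l2) v = sub (rV R) (act R l1 (act R l2 v)) (act R l2 (act R l1 v)))"

definition rep_hom :: "('k::field,'a,'b) rep \<Rightarrow> ('k,'c,'d) rep \<Rightarrow> (('a \<Rightarrow> 'c) \<times> ('b \<Rightarrow> 'd)) set" where
  "rep_hom R1 R2 = {(\<phi>,\<psi>). lie_hom (rL R1) (rL R2) \<phi> \<and> linmap (rV R1) (rV R2) \<psi>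
      \<and> (\<forall>l\<in>car (rL R1). \<forall>v\<in>car (rV R1). act R2 (\<phi> l) (\<psi> v) = \<psi> (act R1 l v))}"

section \<open>Lie algebras with projection-derivation (variety Theta)\<close>

record ('k,'c) lpd =
  pM :: "('k,'c) lie"
  prj :: "'c \<Rightarrow> 'c"

definition is_lpd :: "('k::field,'c) lpd \<Rightarrow> bool" where
  "is_lpd A \<longleftrightarrow> lie_alg (pM A)
   \<and> (\<forall>a\<in>car (pM A). prj A a \<in> car (pM A))
   \<and> (\<forall>a\<in>car (pM A). \<forall>b\<in>car (pM A). prj A (add (pM A) a b) = add (pM A) (prj A a) (prj A b))
   \<and> (\<forall>c. \<forall>a\<in>car (pM A). prj A (sm (pM A) c a) = sm (pM A) c (prj A a))
   \<and> (\<forall>a\<in>car (pM A). prj A (prj A a) = prj A a)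
   \<and> (\<forall>a\<in>car (pM A). \<forall>b\<in>car (pM A).
        prj A (br (pM A) a b) = add (pM A) (br (pM A) (prj A a) b) (br (pM A) a (prj A b)))"

definition lpd_hom :: "('k::field,'c) lpd \<Rightarrow> ('k,'d) lpd \<Rightarrow> ('c \<Rightarrow> 'd) set" where
  "lpd_hom A B = {f. lie_hom (pM A) (pM B) f \<and> (\<forall>a\<in>car (pM A). f (prj A a) = prj B (f a))}"

definition Fobj :: "('k::field,'a,'b) rep \<Rightarrow> ('k,'a \<times> 'b) lpd" where
  "Fobj R = \<lparr> pM = \<lparr> car = car (rL R) \<times> car (rV R),
                     zer = (zer (rL R), zer (rV R)),
                     add = (\<lambda>(l1,v1) (l2,v2). (add (rL R) l1 l2, add (rV R) v1 v2)),
                     sm = (\<lambda>c (l,v). (sm (rL R) c l, sm (rV R) c v)),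
                     br = (\<lambda>(l1,v1) (l2,v2). (br (rL R) l1 l2,
                              sub (rV R) (act R l1 v2) (act R l2 v1))) \<rparr>,
             prj = (\<lambda>(l,v). (zer (rL R), v)) \<rparr>"

definition Fmor :: "('k::field,'a,'b) rep \<Rightarrow> ('a \<Rightarrow> 'c) \<times> ('b \<Rightarrow> 'd) \<Rightarrow> ('a \<times> 'b \<Rightarrow> 'c \<times> 'd)" where
  "Fmor R h = restrict (\<lambda>(l,v). (fst h l, snd h v)) (car (rL R) \<times> car (rV R))"

definition Fpairs :: "('k::field,'a,'b) rep \<Rightarrow> ((('a \<Rightarrow> 'c) \<times> ('b \<Rightarrow> 'd)) \<times> (('a \<Rightarrow> 'c) \<times> ('b \<Rightarrow> 'd))) set
     \<Rightarrow> (('a \<times> 'b \<Rightarrow> 'c \<times> 'd) \<times> ('a \<times> 'b \<Rightarrow> 'c \<times> 'd)) set" where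
  "Fpairs R B = (\<lambda>(h1,h2). (Fmor R h1, Fmor R h2)) ` B"

definition kerp :: "('k::field,'c) lpd \<Rightarrow> 'c set" where
  "kerp A = {m \<in> car (pM A). prj A m = zer (pM A)}"

definition imp :: "('k::field,'c) lpd \<Rightarrow> 'c set" where
  "imp A = prj A ` car (pM A)"

definition Finv :: "('k::field,'c) lpd \<Rightarrow> ('k,'c,'c) rep" where
  "Finv A = \<lparr> rL = \<lparr> car = kerp A, zer = zer (pM A), add = add (pM A), sm = sm (pM A), br = br (pM A) \<rparr>,
             rV = \<lparr> car = imp A, zer = zer (pM A), add = add (pM A), sm = sm (pM A) \<rparr>,
             act = br (pM A) \<rparr>"

text \<open>F^-1 on f : (M1,p1) -> (M2,p2): (r2 f kappa1, p2 f iota1) with r2 = id - p2.\<close>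
definition Finv_mor :: "('k::field,'c) lpd \<Rightarrow> ('k,'d) lpd \<Rightarrow> ('c \<Rightarrow> 'd) \<Rightarrow> ('c \<Rightarrow> 'd) \<times> ('c \<Rightarrow> 'd)" where
  "Finv_mor A1 A2 f = (restrict (\<lambda>m. sub (pM A2) (f m) (prj A2 (f m))) (kerp A1),
                        restrict (\<lambda>m. prj A2 (f m)) (imp A1))"

definition Finv_pairs :: "('k::field,'c) lpd \<Rightarrow> ('k,'d) lpd \<Rightarrow> (('c \<Rightarrow> 'd) \<times> ('c \<Rightarrow> 'd)) set
     \<Rightarrow> ((('c \<Rightarrow> 'd) \<times> ('c \<Rightarrow> 'd)) \<times> (('c \<Rightarrow> 'd) \<times> ('c \<Rightarrow> 'd))) set" where
  "Finv_pairs A1 A2 B = (\<lambda>(f,g). (Finv_mor A1 A2 f, Finv_mor A1 A2 g)) ` B"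

definition Tp_rep :: "('k::field,'a,'b) rep \<Rightarrow> ('k,'c,'d) rep \<Rightarrow> 'a set \<times> 'b set
    \<Rightarrow> (('a \<Rightarrow> 'c) \<times> ('b \<Rightarrow> 'd)) set" where
  "Tp_rep W H T = {h \<in> rep_hom W H. (\<forall>t\<in>fst T. fst h t = zer (rL H)) \<and> (\<forall>t\<in>snd T. snd h t = zer (rV H))}"

definition Tpp_rep :: "('k::field,'a,'b) rep \<Rightarrow> ('k,'c,'d) rep \<Rightarrow> 'a set \<times> 'b set \<Rightarrow> 'a set \<times> 'b set" where
  "Tpp_rep W H T = ({w \<in> car (rL W). \<forall>h\<in>Tp_rep W H T. fst h w = zer (rL H)},
                    {w \<in> car (rV W). \<forall>h\<in>Tp_rep W H T. snd h w = zer (rV H)})"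

definition Cl_rep :: "('k::field,'c,'d) rep \<Rightarrow> ('k,'a,'b) rep \<Rightarrow> ('a set \<times> 'b set) set" where
  "Cl_rep H W = {T. fst T \<subseteq> car (rL W) \<and> snd T \<subseteq> car (rV W) \<and> Tpp_rep W H T = T}"

definition Tp_lpd :: "('k::field,'a) lpd \<Rightarrow> ('k,'c) lpd \<Rightarrow> 'a set \<Rightarrow> ('a \<Rightarrow> 'c) set" where
  "Tp_lpd W N T = {h \<in> lpd_hom W N. \<forall>t\<in>T. h t = zer (pM N)}"

definition Tpp_lpd :: "('k::field,'a) lpd \<Rightarrow> ('k,'c) lpd \<Rightarrow> 'a set \<Rightarrow> 'a set" where
  "Tpp_lpd W N T = {w \<in> car (pM W). \<forall>h\<in>Tp_lpd W N T. h w = zer (pM N)}"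

definition Cl_lpd :: "('k::field,'c) lpd \<Rightarrow> ('k,'a) lpd \<Rightarrow> 'a set set" where
  "Cl_lpd N W = {T. T \<subseteq> car (pM W) \<and> Tpp_lpd W N T = T}"

definition beta_rep :: "('k::field,'a,'b) rep \<Rightarrow> ('k,'c,'d) rep \<Rightarrow> 'c set \<times> 'd set
   \<Rightarrow> ((('a \<Rightarrow> 'c) \<times> ('b \<Rightarrow> 'd)) \<times> (('a \<Rightarrow> 'c) \<times> ('b \<Rightarrow> 'd))) set" where
  "beta_rep W1 W2 T = {(h1,h2). h1 \<in> rep_hom W1 W2 \<and> h2 \<in> rep_hom W1 W2
     \<and> (\<forall>l\<in>car (rL W1). sub (rL W2) (fst h1 l) (fst h2 l) \<in> fst T)
     \<and> (\<forall>v\<in>car (rV W1). sub (rV W2) (snd h1 v) (snd h2 v) \<in> snd T)}"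

definition beta_lpd :: "('k::field,'a) lpd \<Rightarrow> ('k,'c) lpd \<Rightarrow> 'c set \<Rightarrow> (('a \<Rightarrow> 'c) \<times> ('a \<Rightarrow> 'c)) set" where
  "beta_lpd F1 F2 T = {(f,g). f \<in> lpd_hom F1 F2 \<and> g \<in> lpd_hom F1 F2
     \<and> (\<forall>a\<in>car (pM F1). sub (pM F2) (f a) (g a) \<in> T)}"

section \<open>Free objects, as term algebras modulo the equational theory\<close>

datatype ('k,'x) lt = LV 'x | L0 | LA "('k,'x) lt" "('k,'x) lt" | LS 'k "('k,'x) lt"
  | LB "('k,'x) lt" "('k,'x) lt"

fun lvars :: "('k,'x) lt \<Rightarrow> 'x set" where
  "lvars (LV x) = {x}" | "lvars L0 = {}" | "lvars (LA a b) = lvars a \<union> lvars b"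
| "lvars (LS c a) = lvars a" | "lvars (LB a b) = lvars a \<union> lvars b"

definition lax :: "(('k::field,'x) lt \<times> ('k,'x) lt) set" where
  "lax = {(LA (LA a b) c, LA a (LA b c)) | a b c. True}
       \<union> {(LA a b, LA b a) | a b. True}
       \<union> {(LA a L0, a) | a. True}
       \<union> {(LA a (LS (-1) a), L0) | a. True}
       \<union> {(LS c (LA a b), LA (LS c a) (LS c b)) | c a b. True}
       \<union> {(LS (c + d) a, LA (LS c a) (LS d a)) | c d a. True}
       \<union> {(LS (c * d) a, LS c (LS d a)) | c d a. True}
       \<union> {(LS 1 a, a) | a. True}
       \<union> {(LB (LA a b) c, LA (LB a c) (LB b c)) | a b c. True}
       \<union> {(LB a (LA b c), LA (LB a b) (LB a c)) | a b c. True}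
       \<union> {(LB (LS c a) b, LS c (LB a b)) | c a b. True}
       \<union> {(LB a (LS c b), LS c (LB a b)) | c a b. True}
       \<union> {(LB a a, L0) | a. True}
       \<union> {(LA (LA (LB a (LB b c)) (LB b (LB c a))) (LB c (LB a b)), L0) | a b c. True}"

inductive lc :: "'x set \<Rightarrow> ('k::field,'x) lt \<Rightarrow> ('k,'x) lt \<Rightarrow> bool" for X where
  lc_ax: "(s,t) \<in> lax \<Longrightarrow> lvars s \<subseteq> X \<Longrightarrow> lvars t \<subseteq> X \<Longrightarrow> lc X s t"
| lc_refl: "lvars s \<subseteq> X \<Longrightarrow> lc X s s"
| lc_sym: "lc X s t \<Longrightarrow> lc X t s"
| lc_trans: "lc X s t \<Longrightarrow> lc X t u \<Longrightarrow> lc X s u"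
| lc_LA: "lc X s s' \<Longrightarrow> lc X t t' \<Longrightarrow> lc X (LA s t) (LA s' t')"
| lc_LS: "lc X s s' \<Longrightarrow> lc X (LS c s) (LS c s')"
| lc_LB: "lc X s s' \<Longrightarrow> lc X t t' \<Longrightarrow> lc X (LB s t) (LB s' t')"

definition lcls :: "'x set \<Rightarrow> ('k::field,'x) lt \<Rightarrow> ('k,'x) lt set" where
  "lcls X t = {s. lc X t s}"

definition pick :: "'a set \<Rightarrow> 'a" where "pick A = (SOME a. a \<in> A)"

definition Lfree :: "'x set \<Rightarrow> ('k::field, ('k,'x) lt set) lie" where
  "Lfree X = \<lparr> car = {lcls X t | t. lvars t \<subseteq> X},
               zer = lcls X L0,
               add = (\<lambda>A B. lcls X (LA (pick A) (pick B))),
               sm = (\<lambda>c A. lcls X (LS c (pick A))),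
               br = (\<lambda>A B. lcls X (LB (pick A) (pick B))) \<rparr>"

datatype ('k,'x,'y) mt = MV 'y | M0 | MA "('k,'x,'y) mt" "('k,'x,'y) mt" | MS 'k "('k,'x,'y) mt"
  | MT "('k,'x) lt" "('k,'x,'y) mt"

fun mxv :: "('k,'x,'y) mt \<Rightarrow> 'x set" where
  "mxv (MV y) = {}" | "mxv M0 = {}" | "mxv (MA a b) = mxv a \<union> mxv b"
| "mxv (MS c a) = mxv a" | "mxv (MT l a) = lvars l \<union> mxv a"

fun myv :: "('k,'x,'y) mt \<Rightarrow> 'y set" where
  "myv (MV y) = {y}" | "myv M0 = {}" | "myv (MA a b) = myv a \<union> myv b"
| "myv (MS c a) = myv a" | "myv (MT l a) = myv a"

definition max_ax :: "(('k::field,'x,'y) mt \<times> ('k,'x,'y) mt) set" where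
  "max_ax = {(MA (MA a b) c, MA a (MA b c)) | a b c. True}
       \<union> {(MA a b, MA b a) | a b. True}
       \<union> {(MA a M0, a) | a. True}
       \<union> {(MA a (MS (-1) a), M0) | a. True}
       \<union> {(MS c (MA a b), MA (MS c a) (MS c b)) | c a b. True}
       \<union> {(MS (c + d) a, MA (MS c a) (MS d a)) | c d a. True}
       \<union> {(MS (c * d) a, MS c (MS d a)) | c d a. True}
       \<union> {(MS 1 a, a) | a. True}
       \<union> {(MT (LA l1 l2) v, MA (MT l1 v) (MT l2 v)) | l1 l2 v. True}
       \<union> {(MT (LS c l) v, MS c (MT l v)) | c l v. True}
       \<union> {(MT l (MA u v), MA (MT l u) (MT l v)) | l u v. True}
       \<union> {(MT l (MS c v), MS c (MT l v)) | l c v. True}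
       \<union> {(MT (LB l1 l2) v, MA (MT l1 (MT l2 v)) (MS (-1) (MT l2 (MT l1 v)))) | l1 l2 v. True}"

inductive mc :: "'x set \<Rightarrow> 'y set \<Rightarrow> ('k::field,'x,'y) mt \<Rightarrow> ('k,'x,'y) mt \<Rightarrow> bool" for X Y where
  mc_ax: "(s,t) \<in> max_ax \<Longrightarrow> mxv s \<subseteq> X \<Longrightarrow> myv s \<subseteq> Y \<Longrightarrow> mxv t \<subseteq> X \<Longrightarrow> myv t \<subseteq> Y \<Longrightarrow> mc X Y s t"
| mc_refl: "mxv s \<subseteq> X \<Longrightarrow> myv s \<subseteq> Y \<Longrightarrow> mc X Y s s"
| mc_sym: "mc X Y s t \<Longrightarrow> mc X Y t s"
| mc_trans: "mc X Y s t \<Longrightarrow> mc X Y t u \<Longrightarrow> mc X Y s u"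
| mc_MA: "mc X Y s s' \<Longrightarrow> mc X Y t t' \<Longrightarrow> mc X Y (MA s t) (MA s' t')"
| mc_MS: "mc X Y s s' \<Longrightarrow> mc X Y (MS c s) (MS c s')"
| mc_MT: "lc X l l' \<Longrightarrow> mc X Y s s' \<Longrightarrow> mc X Y (MT l s) (MT l' s')"

definition mcls :: "'x set \<Rightarrow> 'y set \<Rightarrow> ('k::field,'x,'y) mt \<Rightarrow> ('k,'x,'y) mt set" where
  "mcls X Y t = {s. mc X Y t s}"

definition Wfree :: "'x set \<Rightarrow> 'y set \<Rightarrow> ('k::field, ('k,'x) lt set, ('k,'x,'y) mt set) rep" where
  "Wfree X Y = \<lparr> rL = Lfree X,
                 rV = \<lparr> car = {mcls X Y t | t. mxv t \<subseteq> X \<and> myv t \<subseteq> Y},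
                        zer = mcls X Y M0,
                        add = (\<lambda>A B. mcls X Y (MA (pick A) (pick B))),
                        sm = (\<lambda>c A. mcls X Y (MS c (pick A))) \<rparr>,
                 act = (\<lambda>A B. mcls X Y (MT (pick A) (pick B))) \<rparr>"

datatype ('k,'x) pt = PV 'x | P0 | PA "('k,'x) pt" "('k,'x) pt" | PS 'k "('k,'x) pt"
  | PB "('k,'x) pt" "('k,'x) pt" | PP "('k,'x) pt"

fun pvars :: "('k,'x) pt \<Rightarrow> 'x set" where
  "pvars (PV x) = {x}" | "pvars P0 = {}" | "pvars (PA a b) = pvars a \<union> pvars b"
| "pvars (PS c a) = pvars a" | "pvars (PB a b) = pvars a \<union> pvars b" | "pvars (PP a) = pvars a"

definition pax :: "(('k::field,'x) pt \<times> ('k,'x) pt) set" where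
  "pax = {(PA (PA a b) c, PA a (PA b c)) | a b c. True}
       \<union> {(PA a b, PA b a) | a b. True}
       \<union> {(PA a P0, a) | a. True}
       \<union> {(PA a (PS (-1) a), P0) | a. True}
       \<union> {(PS c (PA a b), PA (PS c a) (PS c b)) | c a b. True}
       \<union> {(PS (c + d) a, PA (PS c a) (PS d a)) | c d a. True}
       \<union> {(PS (c * d) a, PS c (PS d a)) | c d a. True}
       \<union> {(PS 1 a, a) | a. True}
       \<union> {(PB (PA a b) c, PA (PB a c) (PB b c)) | a b c. True}
       \<union> {(PB a (PA b c), PA (PB a b) (PB a c)) | a b c. True}
       \<union> {(PB (PS c a) b, PS c (PB a b)) | c a b. True}
       \<union> {(PB a (PS c b), PS c (PB a b)) | c a b. True}
       \<union> {(PB a a, P0) | a. True}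
       \<union> {(PA (PA (PB a (PB b c)) (PB b (PB c a))) (PB c (PB a b)), P0) | a b c. True}
       \<union> {(PP (PA a b), PA (PP a) (PP b)) | a b. True}
       \<union> {(PP (PS c a), PS c (PP a)) | c a. True}
       \<union> {(PP (PP a), PP a) | a. True}
       \<union> {(PP (PB a b), PA (PB (PP a) b) (PB a (PP b))) | a b. True}"

inductive pc :: "'x set \<Rightarrow> ('k::field,'x) pt \<Rightarrow> ('k,'x) pt \<Rightarrow> bool" for M where
  pc_ax: "(s,t) \<in> pax \<Longrightarrow> pvars s \<subseteq> M \<Longrightarrow> pvars t \<subseteq> M \<Longrightarrow> pc M s t"
| pc_refl: "pvars s \<subseteq> M \<Longrightarrow> pc M s s"
| pc_sym: "pc M s t \<Longrightarrow> pc M t s"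
| pc_trans: "pc M s t \<Longrightarrow> pc M t u \<Longrightarrow> pc M s u"
| pc_PA: "pc M s s' \<Longrightarrow> pc M t t' \<Longrightarrow> pc M (PA s t) (PA s' t')"
| pc_PS: "pc M s s' \<Longrightarrow> pc M (PS c s) (PS c s')"
| pc_PB: "pc M s s' \<Longrightarrow> pc M t t' \<Longrightarrow> pc M (PB s t) (PB s' t')"
| pc_PP: "pc M s s' \<Longrightarrow> pc M (PP s) (PP s')"

definition pcls :: "'x set \<Rightarrow> ('k::field,'x) pt \<Rightarrow> ('k,'x) pt set" where
  "pcls M t = {s. pc M t s}"

definition Ffree :: "'x set \<Rightarrow> ('k::field, ('k,'x) pt set) lpd" where
  "Ffree M = \<lparr> pM = \<lparr> car = {pcls M t | t. pvars t \<subseteq> M},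
                      zer = pcls M P0,
                      add = (\<lambda>A B. pcls M (PA (pick A) (pick B))),
                      sm = (\<lambda>c A. pcls M (PS c (pick A))),
                      br = (\<lambda>A B. pcls M (PB (pick A) (pick B))) \<rparr>,
               prj = (\<lambda>A. pcls M (PP (pick A))) \<rparr>"

end

theory Submission
  imports Defs
begin

text \<open>
  A homomorphism \<open>f : L1 \<oplus> V1 \<rightarrow> L2 \<oplus> V2\<close> of Lie algebras with projection-derivation commutes
  with the projections, so it is the direct sum of its restrictions to \<open>L1\<close> and \<open>V1\<close>, and these form a
  homomorphism of representations: F is bijective on homomorphisms. Conversely every \<open>(M, p)\<close> splits
  as \<open>ker p \<oplus> im p\<close> with \<open>im p\<close> abelian (in characteristic 0), so a homomorphism \<open>(\<phi>, \<psi>)\<close> of the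
  associated representations glues to \<open>l + v \<mapsto> \<phi> l + \<psi> v\<close>, and \<open>F\<^sup>-\<^sup>1\<close> is bijective on homomorphisms
  as well. Along these bijections the condition \<open>f a - g a \<in> T\<close> for all \<open>a\<close> turns into the sortwise
  condition on the components: directly for \<open>T1 \<times> T2\<close>, and for \<open>(T \<inter> ker p, T \<inter> im p)\<close> because
  an \<open>N\<close>-closed \<open>T\<close>, being an intersection of kernels, is closed under addition.
\<close>

section \<open>The free objects are models of their theories\<close>

lemma lcls_eq: "lc X s t \<Longrightarrow> lcls X s = lcls X t"
  unfolding lcls_def by (rule Collect_cong) (metis lc_sym lc_trans)

lemma lc_pick_lcls: "lvars t \<subseteq> X \<Longrightarrow> lc X (pick (lcls X t)) t"
  unfolding pick_def lcls_def by (metis (mono_tags) someI mem_Collect_eq lc_refl lc_sym)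

lemma Lfree_car: "car (Lfree X) = {lcls X t | t. lvars t \<subseteq> X}"
  unfolding Lfree_def by simp

lemma Lfree_zer: "zer (Lfree X) = lcls X L0"
  unfolding Lfree_def by simp

lemma Lfree_add: "lvars a \<subseteq> X \<Longrightarrow> lvars b \<subseteq> X \<Longrightarrow> add (Lfree X) (lcls X a) (lcls X b) = lcls X (LA a b)"
  unfolding Lfree_def by (simp, intro lcls_eq lc_LA lc_pick_lcls)

lemma Lfree_sm: "lvars a \<subseteq> X \<Longrightarrow> sm (Lfree X) c (lcls X a) = lcls X (LS c a)"
  unfolding Lfree_def by (simp, intro lcls_eq lc_LS lc_pick_lcls)

lemma Lfree_br: "lvars a \<subseteq> X \<Longrightarrow> lvars b \<subseteq> X \<Longrightarrow> br (Lfree X) (lcls X a) (lcls X b) = lcls X (LB a b)"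
  unfolding Lfree_def by (simp, intro lcls_eq lc_LB lc_pick_lcls)

lemma ball_Lfree: "(\<forall>a\<in>car (Lfree X). P a) \<longleftrightarrow> (\<forall>t. lvars t \<subseteq> X \<longrightarrow> P (lcls X t))"
  unfolding Lfree_car by auto

lemma lcls_in_Lfree: "lvars t \<subseteq> X \<Longrightarrow> lcls X t \<in> car (Lfree X)"
  unfolding Lfree_car by auto

lemma lcls_eq_if_lax: "(s, t) \<in> lax \<Longrightarrow> lvars s \<subseteq> X \<Longrightarrow> lvars t \<subseteq> X \<Longrightarrow> lcls X s = lcls X t"
  by (intro lcls_eq lc_ax)

lemma lie_alg_Lfree: "lie_alg (Lfree X)"
  unfolding lie_alg_def vspace_def ball_Lfree
  by (simp add: Lfree_add Lfree_sm Lfree_br Lfree_zer lcls_in_Lfree)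
     (intro conjI allI impI; rule lcls_eq_if_lax; simp add: lax_def)

lemma mcls_eq: "mc X Y s t \<Longrightarrow> mcls X Y s = mcls X Y t"
  unfolding mcls_def by (rule Collect_cong) (metis mc_sym mc_trans)

lemma mc_pick_mcls: "mxv t \<subseteq> X \<Longrightarrow> myv t \<subseteq> Y \<Longrightarrow> mc X Y (pick (mcls X Y t)) t"
  unfolding pick_def mcls_def by (metis (mono_tags) someI mem_Collect_eq mc_refl mc_sym)

lemma Wfree_rL: "rL (Wfree X Y) = Lfree X"
  unfolding Wfree_def by simp

lemma Wfree_car: "car (rV (Wfree X Y)) = {mcls X Y t | t. mxv t \<subseteq> X \<and> myv t \<subseteq> Y}"
  unfolding Wfree_def by simp

lemma Wfree_zer: "zer (rV (Wfree X Y)) = mcls X Y M0"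
  unfolding Wfree_def by simp

lemma Wfree_add: "mxv a \<subseteq> X \<Longrightarrow> myv a \<subseteq> Y \<Longrightarrow> mxv b \<subseteq> X \<Longrightarrow> myv b \<subseteq> Y \<Longrightarrow>
    add (rV (Wfree X Y)) (mcls X Y a) (mcls X Y b) = mcls X Y (MA a b)"
  unfolding Wfree_def by (simp, intro mcls_eq mc_MA mc_pick_mcls)

lemma Wfree_sm: "mxv a \<subseteq> X \<Longrightarrow> myv a \<subseteq> Y \<Longrightarrow> sm (rV (Wfree X Y)) c (mcls X Y a) = mcls X Y (MS c a)"
  unfolding Wfree_def by (simp, intro mcls_eq mc_MS mc_pick_mcls)

lemma Wfree_act: "lvars l \<subseteq> X \<Longrightarrow> mxv a \<subseteq> X \<Longrightarrow> myv a \<subseteq> Y \<Longrightarrow>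
    act (Wfree X Y) (lcls X l) (mcls X Y a) = mcls X Y (MT l a)"
  unfolding Wfree_def by (simp, intro mcls_eq mc_MT mc_pick_mcls lc_pick_lcls)

lemma ball_Wfree: "(\<forall>a\<in>car (rV (Wfree X Y)). P a) \<longleftrightarrow> (\<forall>t. mxv t \<subseteq> X \<longrightarrow> myv t \<subseteq> Y \<longrightarrow> P (mcls X Y t))"
  unfolding Wfree_car by auto

lemma mcls_in_Wfree: "mxv t \<subseteq> X \<Longrightarrow> myv t \<subseteq> Y \<Longrightarrow> mcls X Y t \<in> car (rV (Wfree X Y))"
  unfolding Wfree_car by auto

lemma mcls_eq_if_max_ax: "(s, t) \<in> max_ax \<Longrightarrow> mxv s \<subseteq> X \<Longrightarrow> myv s \<subseteq> Y \<Longrightarrow> mxv t \<subseteq> X \<Longrightarrow> myv t \<subseteq> Y \<Longrightarrow>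
    mcls X Y s = mcls X Y t"
  by (intro mcls_eq mc_ax)

lemma is_rep_Wfree: "is_rep (Wfree X Y)"
  unfolding is_rep_def Wfree_rL vspace_def ball_Lfree ball_Wfree sub_def
  by (simp add: lie_alg_Lfree Lfree_add Lfree_sm Lfree_br Lfree_zer lcls_in_Lfree
        Wfree_add Wfree_sm Wfree_zer Wfree_act mcls_in_Wfree)
     (intro conjI allI impI; rule mcls_eq_if_max_ax; simp add: max_ax_def)

lemma pcls_eq: "pc M s t \<Longrightarrow> pcls M s = pcls M t"
  unfolding pcls_def by (rule Collect_cong) (metis pc_sym pc_trans)

lemma pc_pick_pcls: "pvars t \<subseteq> M \<Longrightarrow> pc M (pick (pcls M t)) t"
  unfolding pick_def pcls_def by (metis (mono_tags) someI mem_Collect_eq pc_refl pc_sym)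

lemma Ffree_car: "car (pM (Ffree M)) = {pcls M t | t. pvars t \<subseteq> M}"
  unfolding Ffree_def by simp

lemma Ffree_zer: "zer (pM (Ffree M)) = pcls M P0"
  unfolding Ffree_def by simp

lemma Ffree_add: "pvars a \<subseteq> M \<Longrightarrow> pvars b \<subseteq> M \<Longrightarrow> add (pM (Ffree M)) (pcls M a) (pcls M b) = pcls M (PA a b)"
  unfolding Ffree_def by (simp, intro pcls_eq pc_PA pc_pick_pcls)

lemma Ffree_sm: "pvars a \<subseteq> M \<Longrightarrow> sm (pM (Ffree M)) c (pcls M a) = pcls M (PS c a)"
  unfolding Ffree_def by (simp, intro pcls_eq pc_PS pc_pick_pcls)

lemma Ffree_br: "pvars a \<subseteq> M \<Longrightarrow> pvars b \<subseteq> M \<Longrightarrow> br (pM (Ffree M)) (pcls M a) (pcls M b) = pcls M (PB a b)"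
  unfolding Ffree_def by (simp, intro pcls_eq pc_PB pc_pick_pcls)

lemma Ffree_prj: "pvars a \<subseteq> M \<Longrightarrow> prj (Ffree M) (pcls M a) = pcls M (PP a)"
  unfolding Ffree_def by (simp, intro pcls_eq pc_PP pc_pick_pcls)

lemma ball_Ffree: "(\<forall>a\<in>car (pM (Ffree M)). P a) \<longleftrightarrow> (\<forall>t. pvars t \<subseteq> M \<longrightarrow> P (pcls M t))"
  unfolding Ffree_car by auto

lemma pcls_in_Ffree: "pvars t \<subseteq> M \<Longrightarrow> pcls M t \<in> car (pM (Ffree M))"
  unfolding Ffree_car by auto

lemma pcls_eq_if_pax: "(s, t) \<in> pax \<Longrightarrow> pvars s \<subseteq> M \<Longrightarrow> pvars t \<subseteq> M \<Longrightarrow> pcls M s = pcls M t"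
  by (intro pcls_eq pc_ax)

lemma is_lpd_Ffree: "is_lpd (Ffree M)"
  unfolding is_lpd_def lie_alg_def vspace_def ball_Ffree
  by (simp add: Ffree_add Ffree_sm Ffree_br Ffree_zer Ffree_prj pcls_in_Ffree)
     (intro conjI allI impI; rule pcls_eq_if_pax; simp add: pax_def)

locale vspace_locale =
  fixes V :: "('k::field,'a,'m) vs_scheme"
  assumes vspace: "vspace V"
begin

lemma zer_in [simp]: "zer V \<in> car V"
  and add_in [simp]: "a \<in> car V \<Longrightarrow> b \<in> car V \<Longrightarrow> add V a b \<in> car V"
  and sm_in [simp]: "a \<in> car V \<Longrightarrow> sm V c a \<in> car V"
  and add_assoc: "a \<in> car V \<Longrightarrow> b \<in> car V \<Longrightarrow> e \<in> car V \<Longrightarrow> add V (add V a b) e = add V a (add V b e)"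
  and add_commute: "a \<in> car V \<Longrightarrow> b \<in> car V \<Longrightarrow> add V a b = add V b a"
  and add_zer_right [simp]: "a \<in> car V \<Longrightarrow> add V a (zer V) = a"
  and add_neg_right [simp]: "a \<in> car V \<Longrightarrow> add V a (sm V (-1) a) = zer V"
  and sm_add_right: "a \<in> car V \<Longrightarrow> b \<in> car V \<Longrightarrow> sm V c (add V a b) = add V (sm V c a) (sm V c b)"
  and sm_add_left: "a \<in> car V \<Longrightarrow> sm V (c + d) a = add V (sm V c a) (sm V d a)"
  and sm_sm: "a \<in> car V \<Longrightarrow> sm V c (sm V d a) = sm V (c * d) a"
  and sm_one [simp]: "a \<in> car V \<Longrightarrow> sm V 1 a = a"
  using vspace unfolding vspace_def by auto

lemma add_left_commute: "a \<in> car V \<Longrightarrow> b \<in> car V \<Longrightarrow> c \<in> car V \<Longrightarrow> add V a (add V b c) = add V b (add V a c)"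
  by (metis add_assoc add_commute)

lemmas add_ac = add_assoc add_commute add_left_commute

lemma add_zer_left [simp]: "a \<in> car V \<Longrightarrow> add V (zer V) a = a"
  by (metis add_commute add_zer_right zer_in)

lemma add_left_cancel:
  assumes "a \<in> car V" "b \<in> car V" "c \<in> car V" "add V a b = add V a c"
  shows "b = c"
  by (metis assms add_assoc add_commute add_neg_right add_zer_left sm_in)

lemma sm_zero [simp]: "a \<in> car V \<Longrightarrow> sm V 0 a = zer V"
  using add_left_cancel[of "sm V 0 a" "sm V 0 a" "zer V"] sm_add_left[of a 0 0] by simp

lemma sm_zer [simp]: "sm V c (zer V) = zer V"
  by (metis sm_zero sm_sm zer_in mult_zero_right)

lemma sub_in [simp]: "a \<in> car V \<Longrightarrow> b \<in> car V \<Longrightarrow> sub V a b \<in> car V"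
  by (simp add: sub_def)

lemma sub_self [simp]: "a \<in> car V \<Longrightarrow> sub V a a = zer V"
  by (simp add: sub_def)

lemma sub_zer [simp]: "a \<in> car V \<Longrightarrow> sub V a (zer V) = a"
  by (simp add: sub_def)

lemma add_sub_cancel [simp]: "a \<in> car V \<Longrightarrow> b \<in> car V \<Longrightarrow> sub V (add V a b) b = a"
  unfolding sub_def by (simp add: add_assoc)

lemma sub_add_cancel [simp]: "a \<in> car V \<Longrightarrow> b \<in> car V \<Longrightarrow> add V (sub V a b) b = a"
  unfolding sub_def by (simp add: add_assoc add_commute[of "sm V (-1) b" b])

lemma sub_add_sub:
  "a \<in> car V \<Longrightarrow> b \<in> car V \<Longrightarrow> c \<in> car V \<Longrightarrow> d \<in> car V \<Longrightarrow>
    sub V (add V a b) (add V c d) = add V (sub V a c) (sub V b d)"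
  unfolding sub_def by (simp add: sm_add_right add_ac)

lemma eq_zer_if_add_self: "a \<in> car V \<Longrightarrow> add V a a = a \<Longrightarrow> a = zer V"
  using add_left_cancel[of a a "zer V"] by simp

lemma neg_unique: "a \<in> car V \<Longrightarrow> b \<in> car V \<Longrightarrow> add V a b = zer V \<Longrightarrow> b = sm V (-1) a"
  using add_left_cancel[of a b "sm V (-1) a"] by simp

end

lemma linmap_in: "linmap V W f \<Longrightarrow> a \<in> car V \<Longrightarrow> f a \<in> car W"
  and linmap_add: "linmap V W f \<Longrightarrow> a \<in> car V \<Longrightarrow> b \<in> car V \<Longrightarrow> f (add V a b) = add W (f a) (f b)"
  and linmap_sm: "linmap V W f \<Longrightarrow> a \<in> car V \<Longrightarrow> f (sm V c a) = sm W c (f a)"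
  unfolding linmap_def by auto

lemma linmap_zer: "vspace V \<Longrightarrow> vspace W \<Longrightarrow> linmap V W f \<Longrightarrow> f (zer V) = zer W"
  by (metis linmap_sm linmap_in vspace_locale.sm_zero vspace_locale.zer_in vspace_locale_def)

lemma linmap_sub: "vspace V \<Longrightarrow> linmap V W f \<Longrightarrow> a \<in> car V \<Longrightarrow> b \<in> car V \<Longrightarrow> f (sub V a b) = sub W (f a) (f b)"
  unfolding sub_def by (simp add: linmap_add linmap_sm vspace_locale.sm_in vspace_locale_def)

locale lie_alg_locale =
  fixes L :: "('k::field,'a,'m) lie_scheme"
  assumes lie_alg: "lie_alg L"
begin

sublocale vspace_locale L
  using lie_alg unfolding lie_alg_def by unfold_locales simp

lemma br_in [simp]: "a \<in> car L \<Longrightarrow> b \<in> car L \<Longrightarrow> br L a b \<in> car L"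
  and br_add_left: "a \<in> car L \<Longrightarrow> b \<in> car L \<Longrightarrow> e \<in> car L \<Longrightarrow> br L (add L a b) e = add L (br L a e) (br L b e)"
  and br_add_right: "a \<in> car L \<Longrightarrow> b \<in> car L \<Longrightarrow> e \<in> car L \<Longrightarrow> br L a (add L b e) = add L (br L a b) (br L a e)"
  and br_sm_left: "a \<in> car L \<Longrightarrow> b \<in> car L \<Longrightarrow> br L (sm L k a) b = sm L k (br L a b)"
  and br_sm_right: "a \<in> car L \<Longrightarrow> b \<in> car L \<Longrightarrow> br L a (sm L k b) = sm L k (br L a b)"
  and br_self [simp]: "a \<in> car L \<Longrightarrow> br L a a = zer L"
  using lie_alg unfolding lie_alg_def by auto

lemma br_anticomm:
  assumes "a \<in> car L" "b \<in> car L"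
  shows "br L b a = sm L (-1) (br L a b)"
proof (rule neg_unique)
  have "zer L = br L (add L a b) (add L a b)"
    using assms by simp
  also have "\<dots> = add L (add L (br L a a) (br L b a)) (add L (br L a b) (br L b b))"
    using assms by (simp del: br_self add: br_add_left br_add_right)
  finally show "add L (br L a b) (br L b a) = zer L"
    using assms by (simp add: add_commute)
qed (use assms in simp_all)

lemma br_zer_left [simp]: "a \<in> car L \<Longrightarrow> br L (zer L) a = zer L"
  using br_sm_left[of "zer L" a 0] by simp

lemma br_zer_right [simp]: "a \<in> car L \<Longrightarrow> br L a (zer L) = zer L"
  using br_sm_right[of a "zer L" 0] by simp

lemma br_add_add_if_abelian:
  assumes "l1 \<in> car L" "v1 \<in> car L" "l2 \<in> car L" "v2 \<in> car L" "br L v1 v2 = zer L"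
  shows "br L (add L l1 v1) (add L l2 v2) = add L (br L l1 l2) (sub L (br L l1 v2) (br L l2 v1))"
proof -
  have "br L (add L l1 v1) (add L l2 v2)
      = add L (add L (br L l1 l2) (br L l1 v2)) (add L (br L v1 l2) (br L v1 v2))"
    using assms(1-4) by (simp add: br_add_left br_add_right add_ac)
  also have "\<dots> = add L (add L (br L l1 l2) (br L l1 v2)) (sm L (-1) (br L l2 v1))"
    using assms by (simp add: br_anticomm[of l2 v1])
  finally show ?thesis
    using assms by (simp add: sub_def add_assoc)
qed

end

locale rep_locale =
  fixes R :: "('k::field,'a,'b) rep"
  assumes rep: "is_rep R"
begin

sublocale L: lie_alg_locale "rL R"
  using rep unfolding is_rep_def by unfold_locales simp

sublocale V: vspace_locale "rV R"
  using rep unfolding is_rep_def by unfold_locales simp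

lemma act_in [simp]: "l \<in> car (rL R) \<Longrightarrow> v \<in> car (rV R) \<Longrightarrow> act R l v \<in> car (rV R)"
  and act_sm_left: "l \<in> car (rL R) \<Longrightarrow> v \<in> car (rV R) \<Longrightarrow> act R (sm (rL R) c l) v = sm (rV R) c (act R l v)"
  using rep unfolding is_rep_def by auto

lemma act_zer_left [simp]: "v \<in> car (rV R) \<Longrightarrow> act R (zer (rL R)) v = zer (rV R)"
  using act_sm_left[of "zer (rL R)" v 0] by simp

end

locale lpd_locale =
  fixes A :: "('k::field,'c) lpd"
  assumes lpd: "is_lpd A"
begin

sublocale lie_alg_locale "pM A"
  using lpd unfolding is_lpd_def by unfold_locales simp

lemma prj_in [simp]: "a \<in> car (pM A) \<Longrightarrow> prj A a \<in> car (pM A)"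
  and prj_add: "a \<in> car (pM A) \<Longrightarrow> b \<in> car (pM A) \<Longrightarrow> prj A (add (pM A) a b) = add (pM A) (prj A a) (prj A b)"
  and prj_sm: "a \<in> car (pM A) \<Longrightarrow> prj A (sm (pM A) c a) = sm (pM A) c (prj A a)"
  and prj_idem [simp]: "a \<in> car (pM A) \<Longrightarrow> prj A (prj A a) = prj A a"
  and prj_br: "a \<in> car (pM A) \<Longrightarrow> b \<in> car (pM A) \<Longrightarrow>
      prj A (br (pM A) a b) = add (pM A) (br (pM A) (prj A a) b) (br (pM A) a (prj A b))"
  using lpd unfolding is_lpd_def by auto

lemma prj_zer [simp]: "prj A (zer (pM A)) = zer (pM A)"
  using prj_sm[of "zer (pM A)" 0] by simp

lemma prj_sub: "a \<in> car (pM A) \<Longrightarrow> b \<in> car (pM A) \<Longrightarrow> prj A (sub (pM A) a b) = sub (pM A) (prj A a) (prj A b)"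
  by (simp add: sub_def prj_add prj_sm)

lemma kerp_iff: "m \<in> kerp A \<longleftrightarrow> m \<in> car (pM A) \<and> prj A m = zer (pM A)"
  unfolding kerp_def by simp

lemma imp_iff: "m \<in> imp A \<longleftrightarrow> m \<in> car (pM A) \<and> prj A m = m"
  unfolding imp_def by (auto intro: image_eqI[where x=m])

lemma kerp_subset: "kerp A \<subseteq> car (pM A)"
  and imp_subset: "imp A \<subseteq> car (pM A)"
  by (auto simp: kerp_iff imp_iff)

lemma zer_in_kerp: "zer (pM A) \<in> kerp A"
  and add_in_kerp: "l1 \<in> kerp A \<Longrightarrow> l2 \<in> kerp A \<Longrightarrow> add (pM A) l1 l2 \<in> kerp A"
  and sm_in_kerp: "l \<in> kerp A \<Longrightarrow> sm (pM A) c l \<in> kerp A"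
  and sub_in_kerp: "l1 \<in> kerp A \<Longrightarrow> l2 \<in> kerp A \<Longrightarrow> sub (pM A) l1 l2 \<in> kerp A"
  and br_in_kerp: "l1 \<in> kerp A \<Longrightarrow> l2 \<in> kerp A \<Longrightarrow> br (pM A) l1 l2 \<in> kerp A"
  by (simp_all add: kerp_iff prj_add prj_sm prj_sub prj_br)

lemma zer_in_imp: "zer (pM A) \<in> imp A"
  and add_in_imp: "v1 \<in> imp A \<Longrightarrow> v2 \<in> imp A \<Longrightarrow> add (pM A) v1 v2 \<in> imp A"
  and sm_in_imp: "v \<in> imp A \<Longrightarrow> sm (pM A) c v \<in> imp A"
  and sub_in_imp: "v1 \<in> imp A \<Longrightarrow> v2 \<in> imp A \<Longrightarrow> sub (pM A) v1 v2 \<in> imp A"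
  and br_kerp_imp_in_imp: "l \<in> kerp A \<Longrightarrow> v \<in> imp A \<Longrightarrow> br (pM A) l v \<in> imp A"
  by (simp_all add: kerp_iff imp_iff prj_add prj_sm prj_sub prj_br)

lemma prj_add_kerp_imp: "l \<in> kerp A \<Longrightarrow> v \<in> imp A \<Longrightarrow> prj A (add (pM A) l v) = v"
  by (simp add: kerp_iff imp_iff prj_add)

lemma kerp_imp_decomp:
  assumes "m \<in> car (pM A)"
  obtains l v where "l \<in> kerp A" "v \<in> imp A" "m = add (pM A) l v"
proof
  show "sub (pM A) m (prj A m) \<in> kerp A" "prj A m \<in> imp A"
    using assms by (simp_all add: kerp_iff imp_iff prj_sub)
qed (use assms in simp)

end

text \<open>For \<open>w = [u, v]\<close> with \<open>u, v \<in> im p\<close>, the derivation rule gives \<open>p w = 2 w\<close>, and idempotence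
  then forces \<open>p w = 0\<close>; hence \<open>2 w = 0\<close>, and \<open>w = 0\<close> as the characteristic is not \<open>2\<close>.\<close>
lemma br_imp_imp:
  fixes A :: "('k::field_char_0,'c) lpd"
  assumes "is_lpd A" "u \<in> imp A" "v \<in> imp A"
  shows "br (pM A) u v = zer (pM A)"
proof -
  interpret lpd_locale A by (rule lpd_locale.intro) fact
  let ?w = "br (pM A) u v"
  have uv: "u \<in> car (pM A)" "v \<in> car (pM A)" "prj A u = u" "prj A v = v"
    using assms imp_iff by auto
  then have w: "?w \<in> car (pM A)" and prj_w: "prj A ?w = add (pM A) ?w ?w"
    by (simp_all add: prj_br)
  have "add (pM A) (prj A ?w) (prj A ?w) = prj A ?w"
    using w prj_idem[OF w] by (simp add: prj_w prj_add)
  then have "add (pM A) ?w ?w = zer (pM A)"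
    using w by (metis eq_zer_if_add_self prj_in prj_w)
  then have "sm (pM A) 2 ?w = zer (pM A)"
    using w sm_add_left[OF w, of 1 1] by simp
  then have "sm (pM A) (1/2) (sm (pM A) 2 ?w) = zer (pM A)"
    by simp
  then show ?thesis
    using w by (simp add: sm_sm)
qed

section \<open>The functor F\<close>

lemma Fobj_car: "car (pM (Fobj R)) = car (rL R) \<times> car (rV R)"
  and Fobj_zer: "zer (pM (Fobj R)) = (zer (rL R), zer (rV R))"
  and Fobj_add: "add (pM (Fobj R)) (l1, v1) (l2, v2) = (add (rL R) l1 l2, add (rV R) v1 v2)"
  and Fobj_sm: "sm (pM (Fobj R)) c (l, v) = (sm (rL R) c l, sm (rV R) c v)"
  and Fobj_br: "br (pM (Fobj R)) (l1, v1) (l2, v2) = (br (rL R) l1 l2, sub (rV R) (act R l1 v2) (act R l2 v1))"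
  and Fobj_prj: "prj (Fobj R) x = (zer (rL R), snd x)"
  and Fobj_sub: "sub (pM (Fobj R)) (l1, v1) (l2, v2) = (sub (rL R) l1 l2, sub (rV R) v1 v2)"
  unfolding Fobj_def sub_def by (simp_all add: case_prod_beta)

lemmas Fobj_simps = Fobj_car Fobj_zer Fobj_add Fobj_sm Fobj_br Fobj_prj Fobj_sub

lemma (in rep_locale) vspace_Fobj: "vspace (pM (Fobj R))"
  unfolding vspace_def Fobj_car
  by (clarsimp simp: Fobj_simps L.add_ac V.add_ac L.sm_add_right V.sm_add_right
      L.sm_add_left V.sm_add_left L.sm_sm V.sm_sm)

lemma Fmor_apply: "l \<in> car (rL R) \<Longrightarrow> v \<in> car (rV R) \<Longrightarrow> Fmor R h (l, v) = (fst h l, snd h v)"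
  unfolding Fmor_def by simp

lemma Fmor_lpd_hom:
  assumes "is_rep W1" "is_rep W2" "h \<in> rep_hom W1 W2"
  shows "Fmor W1 h \<in> lpd_hom (Fobj W1) (Fobj W2)"
proof -
  interpret W1: rep_locale W1 by (rule rep_locale.intro) fact
  interpret W2: rep_locale W2 by (rule rep_locale.intro) fact
  obtain \<phi> \<psi> where h: "h = (\<phi>, \<psi>)" by (cases h)
  have \<phi>: "lie_hom (rL W1) (rL W2) \<phi>" and \<psi>: "linmap (rV W1) (rV W2) \<psi>"
    and act: "\<And>l v. l \<in> car (rL W1) \<Longrightarrow> v \<in> car (rV W1) \<Longrightarrow> act W2 (\<phi> l) (\<psi> v) = \<psi> (act W1 l v)"
    using assms(3) unfolding h rep_hom_def by auto
  have \<phi>_lin: "linmap (rL W1) (rL W2) \<phi>"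
    and \<phi>_br: "\<And>a b. a \<in> car (rL W1) \<Longrightarrow> b \<in> car (rL W1) \<Longrightarrow> \<phi> (br (rL W1) a b) = br (rL W2) (\<phi> a) (\<phi> b)"
    using \<phi> unfolding lie_hom_def by auto
  note [simp] = linmap_in[OF \<phi>_lin] linmap_in[OF \<psi>] linmap_add[OF \<phi>_lin] linmap_add[OF \<psi>]
    linmap_sm[OF \<phi>_lin] linmap_sm[OF \<psi>] linmap_sub[OF W1.V.vspace \<psi>] linmap_zer[OF W1.L.vspace W2.L.vspace \<phi>_lin]
    \<phi>_br act Fmor_apply Fobj_simps
  show ?thesis
    unfolding lpd_hom_def lie_hom_def linmap_def h by (auto simp: Fmor_def)
qed

definition Fmor_inv :: "('k::field,'a,'b) rep \<Rightarrow> ('a \<times> 'b \<Rightarrow> 'c \<times> 'd) \<Rightarrow> ('a \<Rightarrow> 'c) \<times> ('b \<Rightarrow> 'd)" where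
  "Fmor_inv R f = (restrict (\<lambda>l. fst (f (l, zer (rV R)))) (car (rL R)),
                   restrict (\<lambda>v. snd (f (zer (rL R), v))) (car (rV R)))"

lemma lpd_hom_Fobj_apply:
  assumes "is_rep W1" "is_rep W2" "f \<in> lpd_hom (Fobj W1) (Fobj W2)"
    and l: "l \<in> car (rL W1)" and v: "v \<in> car (rV W1)"
  shows "f (l, v) = (fst (Fmor_inv W1 f) l, snd (Fmor_inv W1 f) v)"
proof -
  interpret W1: rep_locale W1 by (rule rep_locale.intro) fact
  interpret W2: rep_locale W2 by (rule rep_locale.intro) fact
  have lin: "linmap (pM (Fobj W1)) (pM (Fobj W2)) f"
    and prj: "\<And>a. a \<in> car (pM (Fobj W1)) \<Longrightarrow> f (prj (Fobj W1) a) = prj (Fobj W2) (f a)"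
    using assms(3) unfolding lpd_hom_def lie_hom_def by auto
  have f_in: "f (l', v') \<in> car (rL W2) \<times> car (rV W2)" if "l' \<in> car (rL W1)" "v' \<in> car (rV W1)" for l' v'
    using linmap_in[OF lin] that by (simp add: Fobj_car)
  have f_zer: "f (zer (rL W1), zer (rV W1)) = (zer (rL W2), zer (rV W2))"
    using linmap_zer[OF W1.vspace_Fobj W2.vspace_Fobj lin] by (simp add: Fobj_zer)
  have f_prj: "f (zer (rL W1), v') = (zer (rL W2), snd (f (l', v')))"
    if "l' \<in> car (rL W1)" "v' \<in> car (rV W1)" for l' v'
    using prj[of "(l', v')"] that by (simp add: Fobj_simps)
  have "snd (f (l, zer (rV W1))) = zer (rV W2)"
    using f_prj[OF l W1.V.zer_in] f_zer by simp
  moreover have "fst (f (zer (rL W1), v)) = zer (rL W2)"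
    using f_prj[OF l v] by simp
  moreover have "f (l, v) = add (pM (Fobj W2)) (f (l, zer (rV W1))) (f (zer (rL W1), v))"
    using linmap_add[OF lin, of "(l, zer (rV W1))" "(zer (rL W1), v)"] l v by (simp add: Fobj_simps)
  ultimately show ?thesis
    using f_in[OF l W1.V.zer_in] f_in[OF W1.L.zer_in v] l v
    by (cases "f (l, zer (rV W1))", cases "f (zer (rL W1), v)") (simp add: Fobj_add Fmor_inv_def)
qed

lemma Fmor_Fmor_inv:
  assumes "is_rep W1" "is_rep W2" "f \<in> lpd_hom (Fobj W1) (Fobj W2)"
  shows "Fmor W1 (Fmor_inv W1 f) = f"
proof
  fix x
  have ext: "f \<in> car (pM (Fobj W1)) \<rightarrow>\<^sub>E car (pM (Fobj W2))"
    using assms(3) unfolding lpd_hom_def lie_hom_def linmap_def by simp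
  show "Fmor W1 (Fmor_inv W1 f) x = f x"
  proof (cases "x \<in> car (rL W1) \<times> car (rV W1)")
    case True
    then show ?thesis
      using lpd_hom_Fobj_apply[OF assms] by (auto simp: Fmor_def)
  next
    case False
    then show ?thesis
      using PiE_arb[OF ext] by (simp add: Fmor_def Fobj_car)
  qed
qed

lemma Fmor_inv_rep_hom:
  assumes "is_rep W1" "is_rep W2" "f \<in> lpd_hom (Fobj W1) (Fobj W2)"
  shows "Fmor_inv W1 f \<in> rep_hom W1 W2"
proof -
  interpret W1: rep_locale W1 by (rule rep_locale.intro) fact
  interpret W2: rep_locale W2 by (rule rep_locale.intro) fact
  obtain \<phi> \<psi> where h: "Fmor_inv W1 f = (\<phi>, \<psi>)" by (cases "Fmor_inv W1 f")
  have lin: "linmap (pM (Fobj W1)) (pM (Fobj W2)) f"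
    and br: "\<And>a b. a \<in> car (pM (Fobj W1)) \<Longrightarrow> b \<in> car (pM (Fobj W1)) \<Longrightarrow>
      f (br (pM (Fobj W1)) a b) = br (pM (Fobj W2)) (f a) (f b)"
    using assms(3) unfolding lpd_hom_def lie_hom_def by auto
  have app: "f (l, v) = (\<phi> l, \<psi> v)" if "l \<in> car (rL W1)" "v \<in> car (rV W1)" for l v
    using lpd_hom_Fobj_apply[OF assms that] h by simp
  have in_car: "\<phi> l \<in> car (rL W2) \<and> \<psi> v \<in> car (rV W2)" if "l \<in> car (rL W1)" "v \<in> car (rV W1)" for l v
    using linmap_in[OF lin, of "(l, v)"] that by (simp add: Fobj_car app)
  have zer: "\<phi> (zer (rL W1)) = zer (rL W2)" "\<psi> (zer (rV W1)) = zer (rV W2)"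
    using linmap_zer[OF W1.vspace_Fobj W2.vspace_Fobj lin] by (simp_all add: Fobj_zer app)
  have ext: "\<phi> \<in> car (rL W1) \<rightarrow>\<^sub>E car (rL W2)" "\<psi> \<in> car (rV W1) \<rightarrow>\<^sub>E car (rV W2)"
    using h in_car[OF _ W1.V.zer_in] in_car[OF W1.L.zer_in] unfolding Fmor_inv_def by auto
  note lin_app = linmap_add[OF lin] linmap_sm[OF lin]
  show ?thesis
    unfolding h rep_hom_def lie_hom_def linmap_def
  proof (intro CollectI case_prodI conjI ext ballI allI)
    fix a b assume "a \<in> car (rL W1)" "b \<in> car (rL W1)"
    then show "\<phi> (add (rL W1) a b) = add (rL W2) (\<phi> a) (\<phi> b)"
      and "\<phi> (br (rL W1) a b) = br (rL W2) (\<phi> a) (\<phi> b)"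
      using lin_app(1)[of "(a, zer (rV W1))" "(b, zer (rV W1))"] br[of "(a, zer (rV W1))" "(b, zer (rV W1))"]
      by (simp_all add: Fobj_simps app zer in_car)
  next
    fix a b assume "a \<in> car (rV W1)" "b \<in> car (rV W1)"
    then show "\<psi> (add (rV W1) a b) = add (rV W2) (\<psi> a) (\<psi> b)"
      using lin_app(1)[of "(zer (rL W1), a)" "(zer (rL W1), b)"] by (simp add: Fobj_simps app zer)
  next
    fix c a assume "a \<in> car (rL W1)"
    then show "\<phi> (sm (rL W1) c a) = sm (rL W2) c (\<phi> a)"
      using lin_app(2)[of "(a, zer (rV W1))" c] by (simp add: Fobj_simps app zer)
  next
    fix c a assume "a \<in> car (rV W1)"
    then show "\<psi> (sm (rV W1) c a) = sm (rV W2) c (\<psi> a)"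
      using lin_app(2)[of "(zer (rL W1), a)" c] by (simp add: Fobj_simps app zer)
  next
    fix l v assume "l \<in> car (rL W1)" "v \<in> car (rV W1)"
    then show "act W2 (\<phi> l) (\<psi> v) = \<psi> (act W1 l v)"
      using br[of "(l, zer (rV W1))" "(zer (rL W1), v)"] by (simp add: Fobj_simps app zer in_car)
  qed
qed

lemma Fpairs_beta_rep:
  assumes "is_rep W1" "is_rep W2"
  shows "Fpairs W1 (beta_rep W1 W2 (T1, T2)) = beta_lpd (Fobj W1) (Fobj W2) (T1 \<times> T2)"
proof (intro equalityI subsetI)
  fix x assume "x \<in> Fpairs W1 (beta_rep W1 W2 (T1, T2))"
  then obtain h1 h2 where x: "x = (Fmor W1 h1, Fmor W1 h2)" and h: "(h1, h2) \<in> beta_rep W1 W2 (T1, T2)"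
    unfolding Fpairs_def by auto
  have "h1 \<in> rep_hom W1 W2" "h2 \<in> rep_hom W1 W2"
    using h unfolding beta_rep_def by auto
  moreover have "\<forall>a\<in>car (pM (Fobj W1)). sub (pM (Fobj W2)) (Fmor W1 h1 a) (Fmor W1 h2 a) \<in> T1 \<times> T2"
    using h unfolding beta_rep_def by (auto simp: Fobj_car Fmor_apply Fobj_sub)
  ultimately show "x \<in> beta_lpd (Fobj W1) (Fobj W2) (T1 \<times> T2)"
    unfolding x beta_lpd_def using Fmor_lpd_hom[OF assms] by auto
next
  interpret W1: rep_locale W1 by (rule rep_locale.intro) fact
  fix x assume "x \<in> beta_lpd (Fobj W1) (Fobj W2) (T1 \<times> T2)"
  then obtain f g where x: "x = (f, g)"
    and f: "f \<in> lpd_hom (Fobj W1) (Fobj W2)" and g: "g \<in> lpd_hom (Fobj W1) (Fobj W2)"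
    and diff: "\<forall>a\<in>car (pM (Fobj W1)). sub (pM (Fobj W2)) (f a) (g a) \<in> T1 \<times> T2"
    unfolding beta_lpd_def by auto
  have componentwise: "sub (rL W2) (fst (Fmor_inv W1 f) l) (fst (Fmor_inv W1 g) l) \<in> T1
      \<and> sub (rV W2) (snd (Fmor_inv W1 f) v) (snd (Fmor_inv W1 g) v) \<in> T2"
    if "l \<in> car (rL W1)" "v \<in> car (rV W1)" for l v
    using diff that lpd_hom_Fobj_apply[OF assms f that] lpd_hom_Fobj_apply[OF assms g that]
    by (force simp: Fobj_car Fobj_sub)
  have "(Fmor_inv W1 f, Fmor_inv W1 g) \<in> beta_rep W1 W2 (T1, T2)"
    unfolding beta_rep_def using Fmor_inv_rep_hom[OF assms f] Fmor_inv_rep_hom[OF assms g]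
      componentwise[OF _ W1.V.zer_in] componentwise[OF W1.L.zer_in] by auto
  then show "x \<in> Fpairs W1 (beta_rep W1 W2 (T1, T2))"
    unfolding Fpairs_def x using Fmor_Fmor_inv[OF assms f] Fmor_Fmor_inv[OF assms g]
    by (force intro: image_eqI[where x="(Fmor_inv W1 f, Fmor_inv W1 g)"])
qed

section \<open>The functor F^-1\<close>

lemma Finv_simps [simp]:
  "car (rL (Finv A)) = kerp A" "zer (rL (Finv A)) = zer (pM A)" "add (rL (Finv A)) = add (pM A)"
  "sm (rL (Finv A)) = sm (pM A)" "br (rL (Finv A)) = br (pM A)"
  "car (rV (Finv A)) = imp A" "zer (rV (Finv A)) = zer (pM A)" "add (rV (Finv A)) = add (pM A)"
  "sm (rV (Finv A)) = sm (pM A)" "act (Finv A) = br (pM A)"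
  unfolding Finv_def by simp_all

lemma Finv_sub [simp]: "sub (rL (Finv A)) = sub (pM A)" "sub (rV (Finv A)) = sub (pM A)"
  unfolding sub_def[abs_def] by simp_all

lemma lpd_hom_kerp_imp:
  assumes "is_lpd A1" "is_lpd A2" "f \<in> lpd_hom A1 A2"
  shows "l \<in> kerp A1 \<Longrightarrow> f l \<in> kerp A2" and "v \<in> imp A1 \<Longrightarrow> f v \<in> imp A2"
proof -
  interpret A1: lpd_locale A1 by (rule lpd_locale.intro) fact
  interpret A2: lpd_locale A2 by (rule lpd_locale.intro) fact
  have lin: "linmap (pM A1) (pM A2) f" and prj: "\<And>a. a \<in> car (pM A1) \<Longrightarrow> f (prj A1 a) = prj A2 (f a)"
    using assms(3) unfolding lpd_hom_def lie_hom_def by auto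
  show "l \<in> kerp A1 \<Longrightarrow> f l \<in> kerp A2" "v \<in> imp A1 \<Longrightarrow> f v \<in> imp A2"
    using prj[of l] prj[of v] linmap_in[OF lin] linmap_zer[OF A1.vspace A2.vspace lin]
    by (simp_all add: A1.kerp_iff A2.kerp_iff A1.imp_iff A2.imp_iff)
qed

lemma Finv_mor_apply:
  assumes "is_lpd A1" "is_lpd A2" "f \<in> lpd_hom A1 A2"
  shows "l \<in> kerp A1 \<Longrightarrow> fst (Finv_mor A1 A2 f) l = f l" and "v \<in> imp A1 \<Longrightarrow> snd (Finv_mor A1 A2 f) v = f v"
proof -
  interpret A2: lpd_locale A2 by (rule lpd_locale.intro) fact
  show "l \<in> kerp A1 \<Longrightarrow> fst (Finv_mor A1 A2 f) l = f l" "v \<in> imp A1 \<Longrightarrow> snd (Finv_mor A1 A2 f) v = f v"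
    using lpd_hom_kerp_imp[OF assms] by (simp_all add: Finv_mor_def A2.kerp_iff A2.imp_iff)
qed

lemma Finv_mor_rep_hom:
  assumes "is_lpd A1" "is_lpd A2" "f \<in> lpd_hom A1 A2"
  shows "Finv_mor A1 A2 f \<in> rep_hom (Finv A1) (Finv A2)"
proof -
  interpret A1: lpd_locale A1 by (rule lpd_locale.intro) fact
  have lin: "linmap (pM A1) (pM A2) f"
    and br: "\<And>a b. a \<in> car (pM A1) \<Longrightarrow> b \<in> car (pM A1) \<Longrightarrow> f (br (pM A1) a b) = br (pM A2) (f a) (f b)"
    using assms(3) unfolding lpd_hom_def lie_hom_def by auto
  note on_kerp = A1.kerp_subset[THEN subsetD] and on_imp = A1.imp_subset[THEN subsetD]
  obtain \<phi> \<psi> where h: "Finv_mor A1 A2 f = (\<phi>, \<psi>)" by (cases "Finv_mor A1 A2 f")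
  have \<phi>: "\<And>l. l \<in> kerp A1 \<Longrightarrow> \<phi> l = f l" and \<psi>: "\<And>v. v \<in> imp A1 \<Longrightarrow> \<psi> v = f v"
    using Finv_mor_apply[OF assms] h by (metis fst_conv, metis snd_conv)
  have "\<phi> \<in> kerp A1 \<rightarrow>\<^sub>E kerp A2" "\<psi> \<in> imp A1 \<rightarrow>\<^sub>E imp A2"
    using h \<phi> \<psi> lpd_hom_kerp_imp[OF assms] unfolding Finv_mor_def by auto
  then show ?thesis
    unfolding h rep_hom_def lie_hom_def linmap_def
    by (auto simp: \<phi> \<psi> on_kerp on_imp linmap_add[OF lin] linmap_sm[OF lin] br
        A1.add_in_kerp A1.sm_in_kerp A1.br_in_kerp A1.add_in_imp A1.sm_in_imp A1.br_kerp_imp_in_imp)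
qed

lemma rep_hom_FinvD:
  assumes "(\<phi>, \<psi>) \<in> rep_hom (Finv A1) (Finv A2)"
  shows "\<phi> \<in> kerp A1 \<rightarrow>\<^sub>E kerp A2" "\<psi> \<in> imp A1 \<rightarrow>\<^sub>E imp A2"
    and "l1 \<in> kerp A1 \<Longrightarrow> l2 \<in> kerp A1 \<Longrightarrow> \<phi> (add (pM A1) l1 l2) = add (pM A2) (\<phi> l1) (\<phi> l2)"
    and "l \<in> kerp A1 \<Longrightarrow> \<phi> (sm (pM A1) c l) = sm (pM A2) c (\<phi> l)"
    and "l1 \<in> kerp A1 \<Longrightarrow> l2 \<in> kerp A1 \<Longrightarrow> \<phi> (br (pM A1) l1 l2) = br (pM A2) (\<phi> l1) (\<phi> l2)"
    and "v1 \<in> imp A1 \<Longrightarrow> v2 \<in> imp A1 \<Longrightarrow> \<psi> (add (pM A1) v1 v2) = add (pM A2) (\<psi> v1) (\<psi> v2)"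
    and "v \<in> imp A1 \<Longrightarrow> \<psi> (sm (pM A1) c v) = sm (pM A2) c (\<psi> v)"
    and "l \<in> kerp A1 \<Longrightarrow> v \<in> imp A1 \<Longrightarrow> \<psi> (br (pM A1) l v) = br (pM A2) (\<phi> l) (\<psi> v)"
  using assms unfolding rep_hom_def lie_hom_def linmap_def by auto

definition Finv_lift :: "('k::field,'c) lpd \<Rightarrow> ('k,'d) lpd \<Rightarrow> ('c \<Rightarrow> 'd) \<times> ('c \<Rightarrow> 'd) \<Rightarrow> 'c \<Rightarrow> 'd" where
  "Finv_lift A1 A2 h = restrict (\<lambda>m. add (pM A2) (fst h (sub (pM A1) m (prj A1 m))) (snd h (prj A1 m))) (car (pM A1))"

lemma Finv_lift_add:
  assumes "is_lpd A1" "l \<in> kerp A1" "v \<in> imp A1"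
  shows "Finv_lift A1 A2 h (add (pM A1) l v) = add (pM A2) (fst h l) (snd h v)"
proof -
  interpret A1: lpd_locale A1 by (rule lpd_locale.intro) fact
  have "l \<in> car (pM A1)" "v \<in> car (pM A1)"
    using assms(2,3) A1.kerp_subset A1.imp_subset by auto
  then show ?thesis
    using assms(2,3) by (simp add: Finv_lift_def A1.prj_add_kerp_imp)
qed

lemma rep_hom_Finv_zer:
  assumes "is_lpd A1" "is_lpd A2" and h: "(\<phi>, \<psi>) \<in> rep_hom (Finv A1) (Finv A2)"
  shows "\<phi> (zer (pM A1)) = zer (pM A2)" "\<psi> (zer (pM A1)) = zer (pM A2)"
proof -
  interpret A1: lpd_locale A1 by (rule lpd_locale.intro) fact
  interpret A2: lpd_locale A2 by (rule lpd_locale.intro) fact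
  note hom = rep_hom_FinvD[OF h]
  have "\<phi> (zer (pM A1)) \<in> car (pM A2)" "\<psi> (zer (pM A1)) \<in> car (pM A2)"
    using hom(1,2) A1.zer_in_kerp A1.zer_in_imp A2.kerp_subset A2.imp_subset by auto
  then show "\<phi> (zer (pM A1)) = zer (pM A2)" "\<psi> (zer (pM A1)) = zer (pM A2)"
    using hom(4)[OF A1.zer_in_kerp, of 0] hom(7)[OF A1.zer_in_imp, of 0] by simp_all
qed

lemma Finv_lift_kerp_imp:
  assumes "is_lpd A1" "is_lpd A2" and h: "(\<phi>, \<psi>) \<in> rep_hom (Finv A1) (Finv A2)"
  shows "l \<in> kerp A1 \<Longrightarrow> Finv_lift A1 A2 (\<phi>, \<psi>) l = \<phi> l"
    and "v \<in> imp A1 \<Longrightarrow> Finv_lift A1 A2 (\<phi>, \<psi>) v = \<psi> v"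
proof -
  interpret A1: lpd_locale A1 by (rule lpd_locale.intro) fact
  interpret A2: lpd_locale A2 by (rule lpd_locale.intro) fact
  note hom = rep_hom_FinvD[OF h] and zer = rep_hom_Finv_zer[OF assms]
  show "Finv_lift A1 A2 (\<phi>, \<psi>) l = \<phi> l" if l: "l \<in> kerp A1"
  proof -
    have "l \<in> car (pM A1)" "\<phi> l \<in> car (pM A2)"
      using l hom(1) A1.kerp_subset A2.kerp_subset by auto
    then show ?thesis
      using Finv_lift_add[OF assms(1) l A1.zer_in_imp, of A2 "(\<phi>, \<psi>)"] by (simp add: zer)
  qed
  show "Finv_lift A1 A2 (\<phi>, \<psi>) v = \<psi> v" if v: "v \<in> imp A1"
  proof -
    have "v \<in> car (pM A1)" "\<psi> v \<in> car (pM A2)"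
      using v hom(2) A1.imp_subset A2.imp_subset by auto
    then show ?thesis
      using Finv_lift_add[OF assms(1) A1.zer_in_kerp v, of A2 "(\<phi>, \<psi>)"] by (simp add: zer)
  qed
qed

lemma Finv_lift_linmap:
  assumes "is_lpd A1" "is_lpd A2" and h: "(\<phi>, \<psi>) \<in> rep_hom (Finv A1) (Finv A2)"
  shows "linmap (pM A1) (pM A2) (Finv_lift A1 A2 (\<phi>, \<psi>))"
proof -
  interpret A1: lpd_locale A1 by (rule lpd_locale.intro) fact
  interpret A2: lpd_locale A2 by (rule lpd_locale.intro) fact
  note hom = rep_hom_FinvD[OF h] and lift_add = Finv_lift_add[OF assms(1)]
  let ?f = "Finv_lift A1 A2 (\<phi>, \<psi>)"
  have in_car: "\<phi> l \<in> car (pM A2)" "\<psi> v \<in> car (pM A2)" "l \<in> car (pM A1)" "v \<in> car (pM A1)"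
    if "l \<in> kerp A1" "v \<in> imp A1" for l v
    using that hom(1,2) A1.kerp_subset A1.imp_subset A2.kerp_subset A2.imp_subset by auto
  show ?thesis
    unfolding linmap_def
  proof (intro conjI ballI allI PiE_I)
    fix a assume "a \<in> car (pM A1)"
    then obtain l v where "l \<in> kerp A1" "v \<in> imp A1" "a = add (pM A1) l v"
      by (rule A1.kerp_imp_decomp)
    then show "?f a \<in> car (pM A2)"
      using in_car by (simp add: lift_add)
  next
    fix a assume "a \<notin> car (pM A1)"
    then show "?f a = undefined"
      by (simp add: Finv_lift_def)
  next
    fix a b assume "a \<in> car (pM A1)" "b \<in> car (pM A1)"
    then obtain l1 v1 l2 v2 where lv: "l1 \<in> kerp A1" "v1 \<in> imp A1" "a = add (pM A1) l1 v1"
      "l2 \<in> kerp A1" "v2 \<in> imp A1" "b = add (pM A1) l2 v2"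
      by (metis A1.kerp_imp_decomp)
    then have "add (pM A1) a b = add (pM A1) (add (pM A1) l1 l2) (add (pM A1) v1 v2)"
      using in_car by (simp add: A1.add_ac)
    then show "?f (add (pM A1) a b) = add (pM A2) (?f a) (?f b)"
      using lv in_car hom(3,6) by (simp add: lift_add A1.add_in_kerp A1.add_in_imp A2.add_ac)
  next
    fix c a assume "a \<in> car (pM A1)"
    then obtain l v where lv: "l \<in> kerp A1" "v \<in> imp A1" "a = add (pM A1) l v"
      by (rule A1.kerp_imp_decomp)
    then have "sm (pM A1) c a = add (pM A1) (sm (pM A1) c l) (sm (pM A1) c v)"
      using in_car by (simp add: A1.sm_add_right)
    then show "?f (sm (pM A1) c a) = sm (pM A2) c (?f a)"
      using lv in_car hom(4,7) by (simp add: lift_add A1.sm_in_kerp A1.sm_in_imp A2.sm_add_right)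
  qed
qed

lemma Finv_lift_br:
  fixes A1 :: "('k::field_char_0,'c) lpd" and A2 :: "('k,'d) lpd"
  assumes "is_lpd A1" "is_lpd A2" and h: "(\<phi>, \<psi>) \<in> rep_hom (Finv A1) (Finv A2)"
    and "a \<in> car (pM A1)" "b \<in> car (pM A1)"
  shows "Finv_lift A1 A2 (\<phi>, \<psi>) (br (pM A1) a b)
    = br (pM A2) (Finv_lift A1 A2 (\<phi>, \<psi>) a) (Finv_lift A1 A2 (\<phi>, \<psi>) b)"
proof -
  interpret A1: lpd_locale A1 by (rule lpd_locale.intro) fact
  interpret A2: lpd_locale A2 by (rule lpd_locale.intro) fact
  note hom = rep_hom_FinvD[OF h] and lift_add = Finv_lift_add[OF assms(1)]
  obtain l1 v1 l2 v2 where lv: "l1 \<in> kerp A1" "v1 \<in> imp A1" "a = add (pM A1) l1 v1"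
    "l2 \<in> kerp A1" "v2 \<in> imp A1" "b = add (pM A1) l2 v2"
    using assms(4,5) by (metis A1.kerp_imp_decomp)
  have \<psi>_imp: "\<psi> v \<in> imp A2" if "v \<in> imp A1" for v
    using hom(2) that by auto
  have in_car: "\<phi> l \<in> car (pM A2)" "\<psi> v \<in> car (pM A2)" "l \<in> car (pM A1)" "v \<in> car (pM A1)"
    if "l \<in> kerp A1" "v \<in> imp A1" for l v
    using that hom(1,2) A1.kerp_subset A1.imp_subset A2.kerp_subset A2.imp_subset by auto
  have \<psi>_sub: "\<psi> (sub (pM A1) v v') = sub (pM A2) (\<psi> v) (\<psi> v')" if "v \<in> imp A1" "v' \<in> imp A1" for v v'
    using that hom(6,7) by (simp add: sub_def A1.sm_in_imp)
  have "br (pM A1) a b = add (pM A1) (br (pM A1) l1 l2) (sub (pM A1) (br (pM A1) l1 v2) (br (pM A1) l2 v1))"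
    using lv in_car A1.br_add_add_if_abelian br_imp_imp[OF assms(1) lv(2,5)] by simp
  then have "Finv_lift A1 A2 (\<phi>, \<psi>) (br (pM A1) a b)
      = add (pM A2) (br (pM A2) (\<phi> l1) (\<phi> l2)) (sub (pM A2) (br (pM A2) (\<phi> l1) (\<psi> v2)) (br (pM A2) (\<phi> l2) (\<psi> v1)))"
    using lv hom(5,8) \<psi>_sub by (simp add: lift_add A1.br_in_kerp A1.br_kerp_imp_in_imp A1.sub_in_imp)
  also have "\<dots> = br (pM A2) (add (pM A2) (\<phi> l1) (\<psi> v1)) (add (pM A2) (\<phi> l2) (\<psi> v2))"
    using A2.br_add_add_if_abelian[OF in_car(1,2)[OF lv(1,2)] in_car(1,2)[OF lv(4,5)]
        br_imp_imp[OF assms(2) \<psi>_imp[OF lv(2)] \<psi>_imp[OF lv(5)]]] by simp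
  finally show ?thesis
    using lv by (simp add: lift_add)
qed

lemma Finv_lift_lpd_hom:
  fixes A1 :: "('k::field_char_0,'c) lpd" and A2 :: "('k,'d) lpd"
  assumes "is_lpd A1" "is_lpd A2" and h: "(\<phi>, \<psi>) \<in> rep_hom (Finv A1) (Finv A2)"
  shows "Finv_lift A1 A2 (\<phi>, \<psi>) \<in> lpd_hom A1 A2"
proof -
  interpret A1: lpd_locale A1 by (rule lpd_locale.intro) fact
  interpret A2: lpd_locale A2 by (rule lpd_locale.intro) fact
  have prj: "Finv_lift A1 A2 (\<phi>, \<psi>) (prj A1 a) = prj A2 (Finv_lift A1 A2 (\<phi>, \<psi>) a)"
    if a: "a \<in> car (pM A1)" for a
  proof -
    obtain l v where lv: "l \<in> kerp A1" "v \<in> imp A1" "a = add (pM A1) l v"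
      using a by (rule A1.kerp_imp_decomp)
    moreover have "\<phi> l \<in> kerp A2" "\<psi> v \<in> imp A2"
      using lv rep_hom_FinvD(1,2)[OF h] by auto
    ultimately show ?thesis
      by (simp add: A1.prj_add_kerp_imp A2.prj_add_kerp_imp Finv_lift_kerp_imp(2)[OF assms] Finv_lift_add[OF assms(1)])
  qed
  show ?thesis
    unfolding lpd_hom_def lie_hom_def using Finv_lift_linmap[OF assms] Finv_lift_br[OF assms] prj by blast
qed

lemma Finv_mor_Finv_lift:
  assumes "is_lpd A1" "is_lpd A2" and h: "(\<phi>, \<psi>) \<in> rep_hom (Finv A1) (Finv A2)"
  shows "Finv_mor A1 A2 (Finv_lift A1 A2 (\<phi>, \<psi>)) = (\<phi>, \<psi>)"
proof -
  interpret A2: lpd_locale A2 by (rule lpd_locale.intro) fact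
  note hom = rep_hom_FinvD[OF h] and lift = Finv_lift_kerp_imp[OF assms]
  have "fst (Finv_mor A1 A2 (Finv_lift A1 A2 (\<phi>, \<psi>))) l = \<phi> l" for l
  proof (cases "l \<in> kerp A1")
    case True
    then have "\<phi> l \<in> kerp A2"
      using hom(1) by auto
    then show ?thesis
      using True by (simp add: Finv_mor_def lift(1) A2.kerp_iff)
  next
    case False
    then show ?thesis
      using PiE_arb[OF hom(1) False] by (simp add: Finv_mor_def)
  qed
  moreover have "snd (Finv_mor A1 A2 (Finv_lift A1 A2 (\<phi>, \<psi>))) v = \<psi> v" for v
  proof (cases "v \<in> imp A1")
    case True
    then have "\<psi> v \<in> imp A2"
      using hom(2) by auto
    then show ?thesis
      using True by (simp add: Finv_mor_def lift(2) A2.imp_iff)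
  next
    case False
    then show ?thesis
      using PiE_arb[OF hom(2) False] by (simp add: Finv_mor_def)
  qed
  ultimately show ?thesis
    by (simp add: prod_eq_iff fun_eq_iff)
qed

lemma Finv_pairs_beta_lpd_subset:
  assumes "is_lpd A1" "is_lpd A2"
  shows "Finv_pairs A1 A2 (beta_lpd A1 A2 T) \<subseteq> beta_rep (Finv A1) (Finv A2) (T \<inter> kerp A2, T \<inter> imp A2)"
proof
  interpret A1: lpd_locale A1 by (rule lpd_locale.intro) fact
  interpret A2: lpd_locale A2 by (rule lpd_locale.intro) fact
  fix x assume "x \<in> Finv_pairs A1 A2 (beta_lpd A1 A2 T)"
  then obtain f g where x: "x = (Finv_mor A1 A2 f, Finv_mor A1 A2 g)"
    and f: "f \<in> lpd_hom A1 A2" and g: "g \<in> lpd_hom A1 A2"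
    and diff: "\<And>a. a \<in> car (pM A1) \<Longrightarrow> sub (pM A2) (f a) (g a) \<in> T"
    unfolding Finv_pairs_def beta_lpd_def by auto
  note f_apply = Finv_mor_apply[OF assms f] lpd_hom_kerp_imp[OF assms f]
    and g_apply = Finv_mor_apply[OF assms g] lpd_hom_kerp_imp[OF assms g]
  have "sub (pM A2) (fst (Finv_mor A1 A2 f) l) (fst (Finv_mor A1 A2 g) l) \<in> T \<inter> kerp A2"
    if "l \<in> kerp A1" for l
    using that diff f_apply g_apply A1.kerp_subset A2.sub_in_kerp by auto
  moreover have "sub (pM A2) (snd (Finv_mor A1 A2 f) v) (snd (Finv_mor A1 A2 g) v) \<in> T \<inter> imp A2"
    if "v \<in> imp A1" for v
    using that diff f_apply g_apply A1.imp_subset A2.sub_in_imp by auto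
  ultimately show "x \<in> beta_rep (Finv A1) (Finv A2) (T \<inter> kerp A2, T \<inter> imp A2)"
    unfolding x beta_rep_def using Finv_mor_rep_hom[OF assms f] Finv_mor_rep_hom[OF assms g]
    by simp
qed

lemma beta_rep_subset_Finv_pairs:
  fixes A1 :: "('k::field_char_0,'c) lpd" and A2 :: "('k,'d) lpd"
  assumes "is_lpd A1" "is_lpd A2" and T_add: "\<And>a b. a \<in> T \<Longrightarrow> b \<in> T \<Longrightarrow> add (pM A2) a b \<in> T"
  shows "beta_rep (Finv A1) (Finv A2) (T \<inter> kerp A2, T \<inter> imp A2) \<subseteq> Finv_pairs A1 A2 (beta_lpd A1 A2 T)"
proof
  interpret A1: lpd_locale A1 by (rule lpd_locale.intro) fact
  interpret A2: lpd_locale A2 by (rule lpd_locale.intro) fact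
  fix x assume x: "x \<in> beta_rep (Finv A1) (Finv A2) (T \<inter> kerp A2, T \<inter> imp A2)"
  then obtain \<phi>1 \<psi>1 \<phi>2 \<psi>2 where x_eq: "x = ((\<phi>1, \<psi>1), (\<phi>2, \<psi>2))"
    by (metis prod.collapse)
  have h1: "(\<phi>1, \<psi>1) \<in> rep_hom (Finv A1) (Finv A2)" and h2: "(\<phi>2, \<psi>2) \<in> rep_hom (Finv A1) (Finv A2)"
    and diff_kerp: "\<And>l. l \<in> kerp A1 \<Longrightarrow> sub (pM A2) (\<phi>1 l) (\<phi>2 l) \<in> T"
    and diff_imp: "\<And>v. v \<in> imp A1 \<Longrightarrow> sub (pM A2) (\<psi>1 v) (\<psi>2 v) \<in> T"
    using x unfolding x_eq beta_rep_def by auto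
  let ?f = "Finv_lift A1 A2 (\<phi>1, \<psi>1)" and ?g = "Finv_lift A1 A2 (\<phi>2, \<psi>2)"
  have "sub (pM A2) (?f a) (?g a) \<in> T" if a: "a \<in> car (pM A1)" for a
  proof -
    obtain l v where lv: "l \<in> kerp A1" "v \<in> imp A1" "a = add (pM A1) l v"
      using a by (rule A1.kerp_imp_decomp)
    have "\<phi>1 l \<in> car (pM A2)" "\<phi>2 l \<in> car (pM A2)" "\<psi>1 v \<in> car (pM A2)" "\<psi>2 v \<in> car (pM A2)"
      using lv rep_hom_FinvD(1,2)[OF h1] rep_hom_FinvD(1,2)[OF h2] A2.kerp_subset A2.imp_subset by auto
    then have "sub (pM A2) (?f a) (?g a) = add (pM A2) (sub (pM A2) (\<phi>1 l) (\<phi>2 l)) (sub (pM A2) (\<psi>1 v) (\<psi>2 v))"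
      using lv by (simp add: Finv_lift_add[OF assms(1)] A2.sub_add_sub)
    then show ?thesis
      using T_add diff_kerp[OF lv(1)] diff_imp[OF lv(2)] by simp
  qed
  then have "(?f, ?g) \<in> beta_lpd A1 A2 T"
    unfolding beta_lpd_def using Finv_lift_lpd_hom[OF assms(1,2) h1] Finv_lift_lpd_hom[OF assms(1,2) h2] by simp
  then show "x \<in> Finv_pairs A1 A2 (beta_lpd A1 A2 T)"
    unfolding Finv_pairs_def x_eq using Finv_mor_Finv_lift[OF assms(1,2) h1] Finv_mor_Finv_lift[OF assms(1,2) h2]
    by (force intro: image_eqI[where x="(?f, ?g)"])
qed

lemma Cl_lpd_add_closed:
  assumes "is_lpd N" "is_lpd W" "T \<in> Cl_lpd N W" "a \<in> T" "b \<in> T"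
  shows "add (pM W) a b \<in> T"
proof -
  interpret N: lpd_locale N by (rule lpd_locale.intro) fact
  interpret W: lpd_locale W by (rule lpd_locale.intro) fact
  have closed: "Tpp_lpd W N T = T" and "T \<subseteq> car (pM W)"
    using assms(3) unfolding Cl_lpd_def by auto
  then have ab: "a \<in> car (pM W)" "b \<in> car (pM W)"
    using assms(4,5) by auto
  have "h (add (pM W) a b) = zer (pM N)" if "h \<in> Tp_lpd W N T" for h
  proof -
    have "linmap (pM W) (pM N) h" "h a = zer (pM N)" "h b = zer (pM N)"
      using that assms(4,5) unfolding Tp_lpd_def lpd_hom_def lie_hom_def by auto
    then show ?thesis
      using linmap_add[of "pM W" "pM N" h a b] ab by simp
  qed
  then have "add (pM W) a b \<in> Tpp_lpd W N T"
    unfolding Tpp_lpd_def using ab by simp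
  then show ?thesis
    using closed by simp
qed

theorem proposition8:
  fixes X1 Y1 X2 Y2 M1 M2 :: "nat set"
    and H :: "('k::field_char_0, 'a, 'b) rep"
    and T1 :: "('k, nat) lt set set" and T2 :: "('k, nat, nat) mt set set"
    and N :: "('k, 'c) lpd"
    and T :: "('k, nat) pt set set"
  assumes "infinite (UNIV :: 'k set)"
  shows "(finite X1 \<and> finite Y1 \<and> card X1 = card Y1
           \<and> finite X2 \<and> finite Y2 \<and> card X2 = card Y2
           \<and> is_rep H \<and> (T1, T2) \<in> Cl_rep H (Wfree X2 Y2)
         \<longrightarrow> Fpairs (Wfree X1 Y1) (beta_rep (Wfree X1 Y1) (Wfree X2 Y2) (T1, T2))
             = beta_lpd (Fobj (Wfree X1 Y1)) (Fobj (Wfree X2 Y2)) (T1 \<times> T2))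
       \<and> (finite M1 \<and> finite M2 \<and> is_lpd N \<and> T \<in> Cl_lpd N (Ffree M2)
         \<longrightarrow> Finv_pairs (Ffree M1) (Ffree M2) (beta_lpd (Ffree M1) (Ffree M2) T)
             = beta_rep (Finv (Ffree M1)) (Finv (Ffree M2))
                 (T \<inter> kerp (Ffree M2), T \<inter> imp (Ffree M2)))"
proof (intro conjI impI)
  show "Fpairs (Wfree X1 Y1) (beta_rep (Wfree X1 Y1) (Wfree X2 Y2) (T1, T2))
      = beta_lpd (Fobj (Wfree X1 Y1)) (Fobj (Wfree X2 Y2)) (T1 \<times> T2)"
    by (rule Fpairs_beta_rep[OF is_rep_Wfree is_rep_Wfree])
next
  assume "finite M1 \<and> finite M2 \<and> is_lpd N \<and> T \<in> Cl_lpd N (Ffree M2)"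
  then have "is_lpd N" "T \<in> Cl_lpd N (Ffree M2)"
    by simp_all
  then show "Finv_pairs (Ffree M1) (Ffree M2) (beta_lpd (Ffree M1) (Ffree M2) T)
      = beta_rep (Finv (Ffree M1)) (Finv (Ffree M2)) (T \<inter> kerp (Ffree M2), T \<inter> imp (Ffree M2))"
    by (intro equalityI Finv_pairs_beta_lpd_subset beta_rep_subset_Finv_pairs is_lpd_Ffree
        Cl_lpd_add_closed[OF _ is_lpd_Ffree])
qed

end
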